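(* Let $n>2$ and $1<k<n$. In $H_B(n,k)$ the eccentricity of a vertex $v$ is $e(v)=3$ if $v\in V_1$; $e(v)=2$ if $v\in V_2$ is an $n$-vertex; and $e(v)=4$ if $v\in V_2$ is an $r$-vertex with $1\le r<n$.
   Context: Fix integers $n\ge 2$ and $1\le k<n$ and positive real numbers $x_1<x_2<\dots<x_n$. Let $\mathscr{B}_n=\{\pm x_1,\pm x_2,\dots,\pm x_{n-1},x_n\}$ (so $-x_n\notin\mathscr{B}_n$). Let $\phi(\mathscr{B}_n)$ be the family of all nonempty subsets $S\subseteq\mathscr{B}_n$ whose elements have pairwise distinct absolute values and whose element of largest absolute value is positive. Let $\mathscr{B}_n^+=\{x_1,\dots,x_n\}$, let $V_1$ be the set of all $k$-element subsets of $\mathscr{B}_n^+$, and let $V_2=\phi(\mathscr{B}_n)\setminus V_1$. For $A\in\phi(\mathscr{B}_n)$ put $A^\dagger=\{|a|:a\in A\}$. The bipartite Kneser B type-$k$ graph $H_B(n,k)$ is the simple graph with vertex set $V_1\cup V_2$ in which $X\in V_1$ and $Y\in V_2$ are adjacent if and only if $X\subseteq Y^\dagger$ or $Y^\dagger\subseteq X$, and there are no other edges. An $r$-vertex is a vertex having exactly $r$ elements. The eccentricity $e(v)$ is the maximum distance from $v$ to any vertex. *)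

theory Defs
  imports Main "HOL-Library.Extended_Nat"
begin

definition Bset :: "(nat \<Rightarrow> real) \<Rightarrow> nat \<Rightarrow> real set" where
  "Bset x n = {x i | i. 1 \<le> i \<and> i \<le> n} \<union> {- x i | i. 1 \<le> i \<and> i \<le> n - 1}"

definition Bplus :: "(nat \<Rightarrow> real) \<Rightarrow> nat \<Rightarrow> real set" where
  "Bplus x n = {x i | i. 1 \<le> i \<and> i \<le> n}"

definition phiB :: "(nat \<Rightarrow> real) \<Rightarrow> nat \<Rightarrow> real set set" where
  "phiB x n = {S. S \<subseteq> Bset x n \<and> S \<noteq> {} \<and> inj_on abs S \<and>
      (\<forall>a\<in>S. (\<forall>b\<in>S. \<bar>b\<bar> \<le> \<bar>a\<bar>) \<longrightarrow> 0 < a)}"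

definition V1 :: "(nat \<Rightarrow> real) \<Rightarrow> nat \<Rightarrow> nat \<Rightarrow> real set set" where
  "V1 x n k = {S. S \<subseteq> Bplus x n \<and> card S = k}"

definition V2 :: "(nat \<Rightarrow> real) \<Rightarrow> nat \<Rightarrow> nat \<Rightarrow> real set set" where
  "V2 x n k = phiB x n - V1 x n k"

definition HBverts :: "(nat \<Rightarrow> real) \<Rightarrow> nat \<Rightarrow> nat \<Rightarrow> real set set" where
  "HBverts x n k = V1 x n k \<union> V2 x n k"

definition HBadj :: "(nat \<Rightarrow> real) \<Rightarrow> nat \<Rightarrow> nat \<Rightarrow> real set \<Rightarrow> real set \<Rightarrow> bool" where
  "HBadj x n k A B \<longleftrightarrow>
     (A \<in> V1 x n k \<and> B \<in> V2 x n k \<and> (A \<subseteq> abs ` B \<or> abs ` B \<subseteq> A)) \<or>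
     (B \<in> V1 x n k \<and> A \<in> V2 x n k \<and> (B \<subseteq> abs ` A \<or> abs ` A \<subseteq> B))"

definition HBedges :: "(nat \<Rightarrow> real) \<Rightarrow> nat \<Rightarrow> nat \<Rightarrow> (real set \<times> real set) set" where
  "HBedges x n k = {(A, B). HBadj x n k A B}"

definition HBdist :: "(nat \<Rightarrow> real) \<Rightarrow> nat \<Rightarrow> nat \<Rightarrow> real set \<Rightarrow> real set \<Rightarrow> enat" where
  "HBdist x n k v w = (INF m \<in> {m. (v, w) \<in> (HBedges x n k) ^^ m}. enat m)"

definition HBecc :: "(nat \<Rightarrow> real) \<Rightarrow> nat \<Rightarrow> nat \<Rightarrow> real set \<Rightarrow> enat" where
  "HBecc x n k v = (SUP w \<in> HBverts x n k. HBdist x n k v w)"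

end

theory Submission
  imports Defs
begin

text \<open>The hub \<open>B\<^sub>n\<^sup>+\<close> lies in \<open>V\<^sub>2\<close> and is adjacent to every vertex of \<open>V\<^sub>1\<close>, and every vertex
  of \<open>V\<^sub>2\<close> has a neighbour in \<open>V\<^sub>1\<close>; so every vertex reaches the hub in at most two steps,
  which gives the upper bounds 3, 2 and 4. The graph is bipartite, so distances from \<open>V\<^sub>1\<close>
  to \<open>V\<^sub>2\<close> are odd and distances inside \<open>V\<^sub>2\<close> are even. A vertex of \<open>V\<^sub>1\<close> is at distance 3
  from a singleton \<open>{p}\<close> with \<open>p\<close> outside it, an \<open>n\<close>-vertex is at distance 2 from any
  singleton, and an \<open>r\<close>-vertex \<open>Z\<close> with \<open>r < n\<close> is at distance 4 from a vertex \<open>W\<close> whose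
  absolute values form the complement of those of \<open>Z\<close>: a common neighbour \<open>u\<close> would be
  comparable with both, and since \<open>1 < k < n\<close> this is impossible.\<close>

lemma relpow_bipartite_parity:
  assumes "R \<subseteq> A \<times> B \<union> B \<times> A" "A \<inter> B = {}" "(v, w) \<in> R ^^ m" "v \<in> A"
  shows "w \<in> (if even m then A else B)"
  using assms(3)
proof (induction m arbitrary: w)
  case 0
  then show ?case using assms(4) by simp
next
  case (Suc m)
  then obtain u where u: "(v, u) \<in> R ^^ m" "(u, w) \<in> R" by auto
  have "u \<in> (if even m then A else B)" using Suc.IH[OF u(1)] .
  moreover have "(u, w) \<in> A \<times> B \<union> B \<times> A" using u(2) assms(1) by blast
  ultimately show ?case using assms(2) by (auto split: if_splits)
qed

lemma bounded_walk_prepend: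
  assumes "(v, u) \<in> R" "\<exists>m\<le>c. (u, w) \<in> R ^^ m"
  shows "\<exists>m\<le>Suc c. (v, w) \<in> R ^^ m"
  using assms by (meson Suc_le_mono relpow_Suc_I2)

lemma not_comparable_with_both_complements:
  assumes "A \<subseteq> S" "A \<noteq> {}" "S - A \<noteq> {}" "U \<noteq> {}" "U \<noteq> S" "U \<subseteq> S"
    and "U \<subseteq> A \<or> A \<subseteq> U" "U \<subseteq> S - A \<or> S - A \<subseteq> U"
  shows False
  using assms by blast

lemma HBdist_le:
  assumes "(v, w) \<in> HBedges x n k ^^ m" "m \<le> c"
  shows "HBdist x n k v w \<le> enat c"
proof -
  have "HBdist x n k v w \<le> enat m"
    unfolding HBdist_def using assms(1) by (intro INF_lower) simp
  then show ?thesis using assms(2) by (simp add: order_trans)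
qed

lemma HBdist_ge:
  assumes "\<And>m. m < c \<Longrightarrow> (v, w) \<notin> HBedges x n k ^^ m"
  shows "enat c \<le> HBdist x n k v w"
  unfolding HBdist_def using assms by (intro INF_greatest) (auto simp: not_less[symmetric])

lemma HBecc_eqI:
  assumes "\<And>w. w \<in> HBverts x n k \<Longrightarrow> \<exists>m\<le>c. (v, w) \<in> HBedges x n k ^^ m"
    and "w\<^sub>0 \<in> HBverts x n k" "\<And>m. m < c \<Longrightarrow> (v, w\<^sub>0) \<notin> HBedges x n k ^^ m"
  shows "HBecc x n k v = enat c"
  unfolding HBecc_def
proof (rule antisym)
  show "(SUP w\<in>HBverts x n k. HBdist x n k v w) \<le> enat c"
    using assms(1) HBdist_le by (metis SUP_least)
  show "enat c \<le> (SUP w\<in>HBverts x n k. HBdist x n k v w)"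
    using assms(2) HBdist_ge[OF assms(3)] by (rule SUP_upper2)
qed

lemma HBedges_bipartite: "HBedges x n k \<subseteq> V1 x n k \<times> V2 x n k \<union> V2 x n k \<times> V1 x n k"
  by (auto simp: HBedges_def HBadj_def)

lemma HBadj_V2_cases:
  assumes "HBadj x n k Y X \<or> HBadj x n k X Y" "Y \<notin> V1 x n k"
  shows "X \<in> V1 x n k" "X \<subseteq> abs ` Y \<or> abs ` Y \<subseteq> X"
  using assms unfolding HBadj_def by blast+

lemma V1_V2_disjoint: "V1 x n k \<inter> V2 x n k = {}"
  by (auto simp: V2_def)

lemma HBwalk_V1_V2_odd:
  assumes "(v, w) \<in> HBedges x n k ^^ m" "v \<in> V1 x n k" "w \<in> V2 x n k"
  shows "odd m"
  using relpow_bipartite_parity[OF HBedges_bipartite V1_V2_disjoint assms(1,2)] assms(3)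
    V1_V2_disjoint by (auto split: if_splits)

lemma HBwalk_V2_V2_even:
  assumes "(v, w) \<in> HBedges x n k ^^ m" "v \<in> V2 x n k" "w \<in> V2 x n k"
  shows "even m"
proof -
  have "HBedges x n k \<subseteq> V2 x n k \<times> V1 x n k \<union> V1 x n k \<times> V2 x n k"
    using HBedges_bipartite by blast
  moreover have "V2 x n k \<inter> V1 x n k = {}" using V1_V2_disjoint by blast
  ultimately have "w \<in> (if even m then V2 x n k else V1 x n k)"
    using assms(1,2) by (rule relpow_bipartite_parity)
  then show ?thesis using assms(3) V1_V2_disjoint by (auto split: if_splits)
qed

locale HB_graph =
  fixes x :: "nat \<Rightarrow> real" and n k :: nat
  assumes k_gt_1: "1 < k" and k_lt_n: "k < n"
    and x_pos: "\<forall>i. 1 \<le> i \<and> i \<le> n \<longrightarrow> 0 < x i"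
    and x_strict_mono: "\<forall>i j. 1 \<le> i \<and> i < j \<and> j \<le> n \<longrightarrow> x i < x j"
begin

abbreviation E where "E \<equiv> HBedges x n k"
abbreviation P where "P \<equiv> Bplus x n"

lemma Bplus_eq_image: "P = x ` {1..n}"
  by (auto simp: Bplus_def)

lemma finite_Bplus: "finite P"
  by (simp add: Bplus_eq_image)

lemma card_Bplus: "card P = n"
proof -
  have "inj_on x {1..n}"
    by (rule inj_onI) (metis atLeastAtMost_iff x_strict_mono less_irrefl linorder_neqE_nat)
  then show ?thesis by (simp add: Bplus_eq_image card_image)
qed

lemma Bplus_pos: "p \<in> P \<Longrightarrow> 0 < p"
  using x_pos by (auto simp: Bplus_def)

lemma abs_image_Bplus_subset: "S \<subseteq> P \<Longrightarrow> abs ` S = S"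
  using Bplus_pos by (auto simp: image_iff) (metis abs_of_pos subsetD)+

lemma inj_on_abs_Bplus: "inj_on abs P"
  using Bplus_pos by (intro inj_onI) (metis abs_of_pos)

lemma Bplus_le_last: "p \<in> P \<Longrightarrow> p \<le> x n"
  using x_strict_mono by (auto simp: Bplus_def le_less)

lemma uminus_Bplus_in_Bset:
  assumes "p \<in> P" "p \<noteq> x n"
  shows "- p \<in> Bset x n"
proof -
  obtain i where "p = x i" "1 \<le> i" "i \<le> n" using assms(1) by (auto simp: Bplus_def)
  moreover then have "i \<le> n - 1" using assms(2) by (cases "i = n") auto
  ultimately show ?thesis by (auto simp: Bset_def)
qed

lemma abs_Bset:
  assumes "a \<in> Bset x n"
  shows "\<bar>a\<bar> \<in> P"
proof -
  obtain i where "a = x i \<or> a = - x i" "1 \<le> i" "i \<le> n"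
    using assms unfolding Bset_def by force
  moreover have "0 < x i" using x_pos calculation(2,3) by blast
  ultimately show ?thesis by (auto simp: Bplus_def)
qed

lemma Bplus_subset_Bset: "P \<subseteq> Bset x n"
  by (auto simp: Bset_def Bplus_def)

lemma phiB_abs:
  assumes "S \<in> phiB x n"
  shows "abs ` S \<subseteq> P" "card (abs ` S) = card S" "S \<noteq> {}"
  using assms abs_Bset card_image by (auto simp: phiB_def)

lemma Bplus_subset_phiB: "S \<subseteq> P \<Longrightarrow> S \<noteq> {} \<Longrightarrow> S \<in> phiB x n"
  unfolding phiB_def using Bplus_subset_Bset Bplus_pos inj_on_abs_Bplus
  by (auto intro: inj_on_subset)

lemma Bplus_subset_V2: "S \<subseteq> P \<Longrightarrow> S \<noteq> {} \<Longrightarrow> card S \<noteq> k \<Longrightarrow> S \<in> V2 x n k"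
  using Bplus_subset_phiB by (auto simp: V2_def V1_def)

lemma Bplus_in_V2: "P \<in> V2 x n k"
proof -
  have "P \<noteq> {}" using card_Bplus k_lt_n by auto
  then show ?thesis using Bplus_subset_V2[of P] card_Bplus k_lt_n by simp
qed

lemma singleton_in_V2: "p \<in> P \<Longrightarrow> {p} \<in> V2 x n k"
  using Bplus_subset_V2[of "{p}"] k_gt_1 by simp

lemma abs_image_eq_Bplus:
  assumes "Y \<in> V2 x n k" "card Y = n"
  shows "abs ` Y = P"
proof -
  have "Y \<in> phiB x n" using assms(1) by (simp add: V2_def)
  then show ?thesis using phiB_abs assms(2) card_Bplus finite_Bplus by (metis card_subset_eq)
qed

lemma V1_adjacent_full:
  assumes "X \<in> V1 x n k" "Y \<in> V2 x n k" "abs ` Y = P"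
  shows "(Y, X) \<in> E" "(X, Y) \<in> E"
  using assms by (auto simp: HBedges_def HBadj_def V1_def)

lemma V2_has_V1_neighbour:
  assumes "Y \<in> V2 x n k"
  obtains X where "X \<in> V1 x n k" "(X, Y) \<in> E" "(Y, X) \<in> E"
proof -
  define S where "S = abs ` Y"
  have "S \<subseteq> P" using phiB_abs assms by (simp add: S_def V2_def)
  then have S: "S \<subseteq> P" "finite S" using finite_Bplus finite_subset by auto
  have "\<exists>X. X \<subseteq> P \<and> card X = k \<and> (X \<subseteq> S \<or> S \<subseteq> X)"
  proof (cases "k \<le> card S")
    case True
    then show ?thesis using S by (metis obtain_subset_with_card_n order_trans)
  next
    case False
    have "k - card S \<le> card (P - S)"
      using S card_Bplus k_lt_n by (simp add: card_Diff_subset finite_subset)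
    then obtain T where T: "T \<subseteq> P - S" "card T = k - card S"
      by (metis obtain_subset_with_card_n)
    have "card (S \<union> T) = card S + card T"
      using T S finite_Bplus by (intro card_Un_disjoint) (auto intro: finite_subset)
    then show ?thesis using S T False by (intro exI[of _ "S \<union> T"]) auto
  qed
  then show ?thesis
    using that assms by (auto simp: HBedges_def HBadj_def V1_def S_def)
qed

lemma full_vertex_reaches_all:
  assumes "Y \<in> V2 x n k" "abs ` Y = P" "w \<in> HBverts x n k"
  shows "\<exists>m\<le>2. (Y, w) \<in> E ^^ m"
proof (cases "w \<in> V1 x n k")
  case True
  then have "(Y, w) \<in> E ^^ 1" using V1_adjacent_full assms(1,2) by simp
  then show ?thesis by (intro exI[of _ 1]) simp
next
  case False
  then have "w \<in> V2 x n k" using assms(3) by (simp add: HBverts_def)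
  then obtain X where "X \<in> V1 x n k" "(X, w) \<in> E" by (rule V2_has_V1_neighbour)
  then have "\<exists>m\<le>1. (X, w) \<in> E ^^ m" by (intro exI[of _ 1]) simp
  then show ?thesis
    using bounded_walk_prepend V1_adjacent_full \<open>X \<in> V1 x n k\<close> assms(1,2)
    by (metis numeral_2_eq_2 One_nat_def)
qed

text \<open>Negating the smallest element \<open>a\<close> of \<open>C\<close> is allowed because \<open>a < Max C \<le> x\<^sub>n\<close>,
  and keeps the element of largest absolute value positive.\<close>

lemma sign_flipped_vertex:
  assumes C: "C \<subseteq> P" "2 \<le> card C"
  obtains W where "W \<in> phiB x n" "abs ` W = C" "\<not> W \<subseteq> P"
proof -
  have fin: "finite C" and "C \<noteq> {}" using C by (auto intro: card_ge_0_finite)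
  define a where "a = Min C"
  define b where "b = Max C"
  have aC: "a \<in> C" and bC: "b \<in> C" using fin \<open>C \<noteq> {}\<close> by (simp_all add: a_def b_def)
  have a_min: "c \<in> C \<Longrightarrow> a \<le> c" for c using fin by (simp add: a_def)
  have "a < b"
  proof -
    obtain c c' where "c \<in> C" "c' \<in> C" "c \<noteq> c'"
      using C(2) card_le_Suc0_iff_eq[OF fin] by fastforce
    then obtain c where "c \<in> C" "a < c" using a_min by (metis order_le_neq_trans)
    then show ?thesis using Max_ge[OF fin \<open>c \<in> C\<close>] by (simp add: b_def)
  qed
  have a_pos: "0 < a" using aC C(1) Bplus_pos by blast
  have "- a \<in> Bset x n"
    using uminus_Bplus_in_Bset aC bC C(1) Bplus_le_last \<open>a < b\<close> by fastforce
  define W where "W = insert (- a) (C - {a})"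
  have abs_C: "abs ` (C - {a}) = C - {a}" using abs_image_Bplus_subset C(1) by blast
  have "abs ` W = C" using abs_C a_pos aC by (auto simp: W_def)
  moreover have "W \<in> phiB x n"
    unfolding phiB_def
  proof (intro CollectI conjI ballI impI)
    show "W \<subseteq> Bset x n" using \<open>- a \<in> Bset x n\<close> C(1) Bplus_subset_Bset by (auto simp: W_def)
    show "inj_on abs W"
      using inj_on_subset[OF inj_on_abs_Bplus] C(1) abs_C a_pos by (auto simp: W_def)
    fix a' assume "a' \<in> W" and a'_max: "\<forall>b'\<in>W. \<bar>b'\<bar> \<le> \<bar>a'\<bar>"
    have "b \<in> W" using bC \<open>a < b\<close> by (auto simp: W_def)
    then have "a' \<noteq> - a" using a'_max a_pos \<open>a < b\<close> by force
    then show "0 < a'" using \<open>a' \<in> W\<close> C(1) Bplus_pos by (auto simp: W_def)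
  qed (simp add: W_def)
  moreover have "\<not> W \<subseteq> P" using a_pos Bplus_pos by (force simp: W_def)
  ultimately show ?thesis using that by blast
qed

lemma complementary_vertex:
  assumes "Z \<in> V2 x n k" "card Z < n"
  obtains W where "W \<in> V2 x n k" "abs ` W = P - abs ` Z"
proof -
  define C where "C = P - abs ` Z"
  have "Z \<in> phiB x n" using assms(1) by (simp add: V2_def)
  then have "abs ` Z \<subseteq> P" "card (abs ` Z) = card Z" by (rule phiB_abs)+
  then have card_C: "card C = n - card Z"
    using card_Bplus finite_Bplus by (simp add: C_def card_Diff_subset finite_subset)
  show ?thesis
  proof (cases "card C = k")
    case False
    moreover have "C \<noteq> {}" using card_C assms(2) by (metis card.empty zero_less_diff less_irrefl)
    ultimately have "C \<in> V2 x n k" using Bplus_subset_V2 by (simp add: C_def)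
    then show ?thesis using that abs_image_Bplus_subset by (simp add: C_def)
  next
    case True
    then obtain W where W: "W \<in> phiB x n" "abs ` W = C" "\<not> W \<subseteq> P"
      using sign_flipped_vertex k_gt_1 by (metis C_def Diff_subset Suc_1 Suc_leI)
    then have "W \<in> V2 x n k" by (simp add: V2_def V1_def)
    then show ?thesis using that W(2) by (simp add: C_def)
  qed
qed

lemma complementary_vertices_no_common_neighbour:
  assumes "Z \<in> V2 x n k" "W \<in> V2 x n k" and W: "abs ` W = P - abs ` Z"
  shows "(Z, W) \<notin> E ^^ 2"
proof
  assume "(Z, W) \<in> E ^^ 2"
  then obtain u where "(Z, u) \<in> E" "(u, W) \<in> E" by (auto simp: numeral_eq_Suc)
  then have "HBadj x n k Z u" "HBadj x n k u W" by (simp_all add: HBedges_def)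
  moreover have "Z \<notin> V1 x n k" "W \<notin> V1 x n k" using assms(1,2) by (simp_all add: V2_def)
  ultimately have u: "u \<in> V1 x n k" "u \<subseteq> abs ` Z \<or> abs ` Z \<subseteq> u" "u \<subseteq> abs ` W \<or> abs ` W \<subseteq> u"
    using HBadj_V2_cases by blast+
  have "W \<in> phiB x n" using assms(2) by (simp add: V2_def)
  then have "P - abs ` Z \<noteq> {}" unfolding W[symmetric] using phiB_abs(3) by blast
  moreover have "abs ` Z \<subseteq> P" "abs ` Z \<noteq> {}" using assms(1) phiB_abs by (auto simp: V2_def)
  ultimately have Z: "abs ` Z \<subseteq> P" "abs ` Z \<noteq> {}" "P - abs ` Z \<noteq> {}" by blast+
  have "u \<noteq> {}" "u \<noteq> P" "u \<subseteq> P"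
    using u(1) card_Bplus k_gt_1 k_lt_n by (auto simp: V1_def)
  moreover have "u \<subseteq> P - abs ` Z \<or> P - abs ` Z \<subseteq> u" using u(3) W by simp
  ultimately show False using not_comparable_with_both_complements[OF Z] u(2) by blast
qed

lemma HBecc_V1:
  assumes v: "v \<in> V1 x n k"
  shows "HBecc x n k v = 3"
proof -
  have hub: "P \<in> V2 x n k" "abs ` P = P" using Bplus_in_V2 abs_image_Bplus_subset by auto
  have reach: "\<exists>m\<le>3. (v, w) \<in> E ^^ m" if "w \<in> HBverts x n k" for w
    using bounded_walk_prepend[OF V1_adjacent_full(2)[OF v hub] full_vertex_reaches_all[OF hub that]]
    by (simp add: numeral_3_eq_3)
  have v_card: "card v = k" and "finite v" using v k_gt_1 by (auto simp: V1_def intro: card_ge_0_finite)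
  have "\<not> P \<subseteq> v"
  proof
    assume "P \<subseteq> v"
    then have "n \<le> k" using card_mono[OF \<open>finite v\<close>] card_Bplus v_card by metis
    then show False using k_lt_n by simp
  qed
  then obtain p where p: "p \<in> P" "p \<notin> v" by blast
  have p_V2: "{p} \<in> V2 x n k" by (rule singleton_in_V2[OF p(1)])
  have far: "(v, {p}) \<notin> E ^^ m" if "m < 3" for m
  proof
    assume walk: "(v, {p}) \<in> E ^^ m"
    have "odd m" using HBwalk_V1_V2_odd[OF walk v p_V2] .
    then have "m = 1" using \<open>m < 3\<close> by presburger
    then have "HBadj x n k v {p}" using walk by (simp add: HBedges_def)
    moreover have "{p} \<notin> V1 x n k" using p_V2 by (simp add: V2_def)
    moreover have "abs ` {p} = {p}" using Bplus_pos[OF p(1)] by simp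
    ultimately have "v \<subseteq> {p}" using HBadj_V2_cases(2) p(2) by fastforce
    then have "card v \<le> 1" using card_mono[of "{p}" v] by simp
    then show False using v_card k_gt_1 by simp
  qed
  have "{p} \<in> HBverts x n k" using p_V2 by (simp add: HBverts_def)
  then have "HBecc x n k v = enat 3" using reach far by (intro HBecc_eqI)
  then show ?thesis by (simp add: numeral_eq_enat)
qed

lemma HBecc_V2_full:
  assumes v: "v \<in> V2 x n k" "card v = n"
  shows "HBecc x n k v = 2"
proof -
  obtain p where p: "p \<in> P" using card_Bplus k_lt_n by fastforce
  have reach: "\<exists>m\<le>2. (v, w) \<in> E ^^ m" if "w \<in> HBverts x n k" for w
    using full_vertex_reaches_all[OF v(1) abs_image_eq_Bplus[OF v] that] .
  have far: "(v, {p}) \<notin> E ^^ m" if "m < 2" for m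
  proof
    assume walk: "(v, {p}) \<in> E ^^ m"
    have "even m" using HBwalk_V2_V2_even[OF walk v(1) singleton_in_V2[OF p]] .
    then have "m = 0" using \<open>m < 2\<close> by presburger
    then have "v = {p}" using walk by simp
    then show False using v(2) k_gt_1 k_lt_n by simp
  qed
  have "{p} \<in> HBverts x n k" using singleton_in_V2[OF p] by (simp add: HBverts_def)
  then have "HBecc x n k v = enat 2" using reach far by (intro HBecc_eqI)
  then show ?thesis by (simp add: numeral_eq_enat)
qed

lemma HBecc_V2_partial:
  assumes v: "v \<in> V2 x n k" "card v < n"
  shows "HBecc x n k v = 4"
proof -
  have hub: "P \<in> V2 x n k" "abs ` P = P" using Bplus_in_V2 abs_image_Bplus_subset by auto
  obtain X where X: "X \<in> V1 x n k" "(v, X) \<in> E" using V2_has_V1_neighbour[OF v(1)] by blast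
  have reach: "\<exists>m\<le>4. (v, w) \<in> E ^^ m" if "w \<in> HBverts x n k" for w
    using bounded_walk_prepend[OF X(2) bounded_walk_prepend[OF V1_adjacent_full(2)[OF X(1) hub]
        full_vertex_reaches_all[OF hub that]]]
    by (simp add: numeral_eq_Suc)
  obtain W where W: "W \<in> V2 x n k" "abs ` W = P - abs ` v"
    using complementary_vertex[OF v] .
  have far: "(v, W) \<notin> E ^^ m" if "m < 4" for m
  proof
    assume walk: "(v, W) \<in> E ^^ m"
    have "even m" using HBwalk_V2_V2_even[OF walk v(1) W(1)] .
    then have "m = 0 \<or> m = 2" using \<open>m < 4\<close> by presburger
    then show False
    proof
      assume "m = 0"
      then have "abs ` v = P - abs ` v" using walk W(2) by simp
      moreover have "abs ` v \<noteq> {}" using v(1) phiB_abs by (auto simp: V2_def)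
      ultimately show False by blast
    next
      assume "m = 2"
      then show False using walk complementary_vertices_no_common_neighbour[OF v(1) W] by simp
    qed
  qed
  have "W \<in> HBverts x n k" using W(1) by (simp add: HBverts_def)
  then have "HBecc x n k v = enat 4" using reach far by (intro HBecc_eqI)
  then show ?thesis by (simp add: numeral_eq_enat)
qed

end

theorem mainTheorem12:
  fixes x :: "nat \<Rightarrow> real" and n k :: nat
  assumes "n > 2" and "1 < k" and "k < n"
    and "\<forall>i. 1 \<le> i \<and> i \<le> n \<longrightarrow> 0 < x i"
    and "\<forall>i j. 1 \<le> i \<and> i < j \<and> j \<le> n \<longrightarrow> x i < x j"
  shows "\<forall>v. (v \<in> V1 x n k \<longrightarrow> HBecc x n k v = 3) \<and>
             (v \<in> V2 x n k \<and> card v = n \<longrightarrow> HBecc x n k v = 2) \<and>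
             (v \<in> V2 x n k \<and> 1 \<le> card v \<and> card v < n \<longrightarrow> HBecc x n k v = 4)"
proof -
  \<comment> \<open>\<open>n > 2\<close> is implied by \<open>1 < k < n\<close>.\<close>
  interpret HB_graph x n k using assms(2-5) by unfold_locales
  show ?thesis using HBecc_V1 HBecc_V2_full HBecc_V2_partial by blast
qed

end
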